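(* Let $k$, $c$ and $n$ be positive integers and let $F=(V,E)$ be a $(2,3)$-graph on at least $5^{k-1}cn$ vertices. If $F$ contains no $(2,3)$-path with $n$ vertices, then there exist pairwise disjoint sets $V_1,\dots,V_k\subseteq V$, each of size at least $cn$, such that no edge of $E$ is a transversal with respect to $V_1,\dots,V_k$, and there is no $3$-edge $uv(w)\in E$ with $u\in V_1\cup\dots\cup V_{k-1}$ and $v,w\in V_k$.
   Context: A $(2,3)$-graph $F=(V,E)$ consists of a vertex set $V$ and a set $E$ of $2$-edges, which are unordered pairs $uv=\{u,v\}$ of distinct vertices, and $3$-edges, written $uv(w)=(\{u,v\},w)$, consisting of an unordered pair $\{u,v\}$ together with a third vertex $w$, where $u,v,w$ are distinct. A sequence of distinct vertices $(x_1,\dots,x_m)$ is a $(2,3)$-path with $m$ vertices in $F$ if for every $i=1,\dots,m-1$ either $x_ix_{i+1}\in E$ or $x_ix_{i+1}(w_i)\in E$ for some $w_i\in V\setminus\{x_1,\dots,x_m\}$, where all these vertices $w_i$ are distinct. Given pairwise disjoint sets $V_1,\dots,V_k$, a $2$-edge $uv$ is a transversal (with respect to $V_1,\dots,V_k$) if $u$ and $v$ lie in two different sets $V_i$, and a $3$-edge $uv(w)$ is a transversal if $u$, $v$ and $w$ lie in three pairwise different sets $V_i$. *)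

theory Defs
  imports Main
begin

text \<open>A (2,3)-graph on vertex set V: E2 is a set of 2-edges (unordered pairs of distinct
vertices), E3 a set of 3-edges uv(w), represented as pairs ({u,v}, w) with u,v,w distinct.\<close>

definition graph23 :: "'a set \<Rightarrow> 'a set set \<Rightarrow> ('a set \<times> 'a) set \<Rightarrow> bool" where
  "graph23 V E2 E3 \<longleftrightarrow>
     (\<forall>e\<in>E2. \<exists>u v. e = {u, v} \<and> u \<noteq> v \<and> u \<in> V \<and> v \<in> V) \<and>
     (\<forall>(e, w)\<in>E3. \<exists>u v. e = {u, v} \<and> u \<noteq> v \<and> u \<noteq> w \<and> v \<noteq> w \<and> u \<in> V \<and> v \<in> V \<and> w \<in> V)"

definition path23 :: "'a set \<Rightarrow> 'a set set \<Rightarrow> ('a set \<times> 'a) set \<Rightarrow> 'a list \<Rightarrow> bool" where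
  "path23 V E2 E3 xs \<longleftrightarrow> distinct xs \<and> set xs \<subseteq> V \<and>
     (\<exists>I w. I \<subseteq> {..<length xs - 1} \<and> inj_on w I \<and>
        (\<forall>i\<in>I. w i \<in> V - set xs \<and> ({xs ! i, xs ! Suc i}, w i) \<in> E3) \<and>
        (\<forall>i < length xs - 1. i \<notin> I \<longrightarrow> {xs ! i, xs ! Suc i} \<in> E2))"

definition transversal2 :: "nat \<Rightarrow> (nat \<Rightarrow> 'a set) \<Rightarrow> 'a \<Rightarrow> 'a \<Rightarrow> bool" where
  "transversal2 k Vs u v \<longleftrightarrow>
     (\<exists>i\<in>{1..k}. \<exists>j\<in>{1..k}. i \<noteq> j \<and> u \<in> Vs i \<and> v \<in> Vs j)"

definition transversal3 :: "nat \<Rightarrow> (nat \<Rightarrow> 'a set) \<Rightarrow> 'a \<Rightarrow> 'a \<Rightarrow> 'a \<Rightarrow> bool" where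
  "transversal3 k Vs u v w \<longleftrightarrow>
     (\<exists>i\<in>{1..k}. \<exists>j\<in>{1..k}. \<exists>l\<in>{1..k}. i \<noteq> j \<and> i \<noteq> l \<and> j \<noteq> l \<and>
        u \<in> Vs i \<and> v \<in> Vs j \<and> w \<in> Vs l)"

end

theory Submission
  imports Defs
begin

(* A depth-first search inside a vertex set T0 extends the current (2,3)-path by a 2-edge, or by a
   3-edge whose third vertex is taken from the unvisited vertices T or from a reservoir Z of candidate
   third vertices, and retires the endpoint of the path when neither is possible. Since no path reaches
   n vertices, once s vertices are retired the retired set S has no 2-edge to T and no 3-edge uv(z) with
   u in S, v in T and z in T or Z, while at most 2(s + n) vertices of T0 and Z have been consumed.
   Recursing inside T, with S added to the reservoir, produces the remaining parts; the new part is the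
   subset of S not used up as third vertices by the recursion, so no 3-edge between two later parts has
   its third vertex in it. Hence a 3-edge joining two parts has its third vertex in the part split off
   first. With m = cn and s = 2 3^j m - m at depth j, a set of 5^(j+1) m vertices leaves 5^j m vertices
   for the recursion, and the reservoir loses at most 2 3^(j+1) m - 2m vertices. *)

definition path23_witnessed ::
    "'a set \<Rightarrow> 'a set set \<Rightarrow> ('a set \<times> 'a) set \<Rightarrow> 'a list \<Rightarrow> nat set \<Rightarrow> (nat \<Rightarrow> 'a) \<Rightarrow> bool" where
  "path23_witnessed V E2 E3 xs I w \<longleftrightarrow> distinct xs \<and> set xs \<subseteq> V \<and> I \<subseteq> {..<length xs - 1} \<and> inj_on w I \<and>
     (\<forall>i\<in>I. w i \<in> V - set xs \<and> ({xs ! i, xs ! Suc i}, w i) \<in> E3) \<and>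
     (\<forall>i < length xs - 1. i \<notin> I \<longrightarrow> {xs ! i, xs ! Suc i} \<in> E2)"

lemma path23_iff_witnessed: "path23 V E2 E3 xs \<longleftrightarrow> (\<exists>I w. path23_witnessed V E2 E3 xs I w)"
  by (simp add: path23_def path23_witnessed_def)

lemma path23_witnessed_snoc_2edge:
  assumes path: "path23_witnessed V E2 E3 xs I w" and y: "y \<in> V" "y \<notin> set xs" "y \<notin> w ` I"
    and edge: "xs = [] \<or> {last xs, y} \<in> E2"
  shows "path23_witnessed V E2 E3 (xs @ [y]) I w"
  unfolding path23_witnessed_def
proof (intro conjI ballI allI impI)
  fix i assume "i \<in> I"
  then have "Suc i < length xs" "w i \<in> V - set xs" "({xs ! i, xs ! Suc i}, w i) \<in> E3"
    using path unfolding path23_witnessed_def by auto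
  then show "w i \<in> V - set (xs @ [y])" "({(xs @ [y]) ! i, (xs @ [y]) ! Suc i}, w i) \<in> E3"
    using y \<open>i \<in> I\<close> by (auto simp: nth_append)
next
  fix i assume i: "i < length (xs @ [y]) - 1" "i \<notin> I"
  show "{(xs @ [y]) ! i, (xs @ [y]) ! Suc i} \<in> E2"
  proof (cases "i = length xs - 1")
    case True
    moreover have "xs \<noteq> []"
      using i by auto
    ultimately show ?thesis
      using edge by (simp add: nth_append last_conv_nth)
  next
    case False
    with i path show ?thesis
      by (auto simp: nth_append path23_witnessed_def)
  qed
qed (use path y in \<open>auto simp: path23_witnessed_def\<close>)

lemma path23_witnessed_snoc_3edge:
  assumes path: "path23_witnessed V E2 E3 xs I w" and "xs \<noteq> []"
    and y: "y \<in> V" "y \<notin> set xs" "y \<notin> w ` I"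
    and z: "z \<in> V" "z \<notin> set xs" "z \<noteq> y" "z \<notin> w ` I" and edge: "({last xs, y}, z) \<in> E3"
  shows "path23_witnessed V E2 E3 (xs @ [y]) (insert (length xs - 1) I) (w(length xs - 1 := z))"
    (is "path23_witnessed _ _ _ _ (insert ?l I) ?w'")
proof -
  have I: "I \<subseteq> {..<?l}" "inj_on w I"
    using path by (auto simp: path23_witnessed_def)
  have "inj_on ?w' (insert ?l I)"
    using I z(4) by (auto simp: inj_on_def)
  moreover have "?w' i \<in> V - set (xs @ [y]) \<and> ({(xs @ [y]) ! i, (xs @ [y]) ! Suc i}, ?w' i) \<in> E3"
    if "i \<in> insert ?l I" for i
  proof (cases "i = ?l")
    case True
    then show ?thesis
      using \<open>xs \<noteq> []\<close> z edge by (auto simp: nth_append last_conv_nth)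
  next
    case False
    then have "i \<in> I" "Suc i < length xs"
      using that I by auto
    then show ?thesis
      using False path y(3) by (auto simp: nth_append path23_witnessed_def)
  qed
  moreover have "{(xs @ [y]) ! i, (xs @ [y]) ! Suc i} \<in> E2"
    if "i < length (xs @ [y]) - 1" "i \<notin> insert ?l I" for i
    using that path by (auto simp: nth_append path23_witnessed_def)
  ultimately show ?thesis
    using path y I \<open>xs \<noteq> []\<close> unfolding path23_witnessed_def by auto
qed

lemma path23_witnessed_butlast:
  assumes path: "path23_witnessed V E2 E3 xs I w"
  shows "path23_witnessed V E2 E3 (butlast xs) (I \<inter> {..<length xs - 2}) w"
proof -
  have "set (butlast xs) \<subseteq> set xs"
    by (simp add: in_set_butlastD subsetI)
  then show ?thesis
    using path unfolding path23_witnessed_def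
    by (auto simp: distinct_butlast nth_butlast intro: inj_on_subset)
qed

lemma card_Diff_le_add_card:
  assumes "finite A" "finite C" "B - C \<subseteq> B'"
  shows "card (A - B') \<le> card (A - B) + card C"
proof -
  have "card (A - B') \<le> card ((A - B) \<union> C)"
    using assms by (intro card_mono) auto
  also have "\<dots> \<le> card (A - B) + card C"
    by (rule card_Un_le)
  finally show ?thesis .
qed

lemma UN_nth_Cons_0: "(\<Union>q\<in>{..<Suc (length As)} - {0}. (A # As) ! q) = \<Union>(set As)"
proof -
  have "{..<Suc (length As)} - {0} = Suc ` {..<length As}"
    by (auto simp: lessThan_Suc_eq_insert_0)
  moreover have "set As = (!) As ` {..<length As}"
    by (auto simp: set_conv_nth)
  ultimately show ?thesis
    by simp
qed

lemma UN_nth_Cons_Suc: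
  "(\<Union>q\<in>{..<Suc (length As)} - {Suc i}. (A # As) ! q) = A \<union> (\<Union>q\<in>{..<length As} - {i}. As ! q)"
proof -
  have "{..<Suc (length As)} - {Suc i} = insert 0 (Suc ` ({..<length As} - {i}))"
    by (auto simp: lessThan_Suc_eq_insert_0)
  then show ?thesis
    by simp
qed

lemma sorted_wrt_disjnt_nth:
  "sorted_wrt disjnt As \<Longrightarrow> i < length As \<Longrightarrow> j < length As \<Longrightarrow> i \<noteq> j \<Longrightarrow> As ! i \<inter> As ! j = {}"
  by (metis disjnt_def disjnt_sym linorder_neqE_nat sorted_wrt_nth_less)

locale path_free_graph23 =
  fixes V :: "'a set" and E2 :: "'a set set" and E3 :: "('a set \<times> 'a) set" and n :: nat
  assumes graph23: "graph23 V E2 E3" and finite_V: "finite V"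
    and no_path: "\<nexists>xs. length xs = n \<and> path23 V E2 E3 xs"
begin

lemma E3_witness_distinct: "({u, v}, z) \<in> E3 \<Longrightarrow> z \<noteq> u \<and> z \<noteq> v"
  using graph23 unfolding graph23_def by (fastforce simp: doubleton_eq_iff)

lemma path23_witnessed_shorter:
  "path23_witnessed V E2 E3 xs I w \<Longrightarrow> length xs \<le> n \<Longrightarrow> length xs < n"
  using no_path path23_iff_witnessed by (metis le_neq_implies_less)

definition separated :: "'a set \<Rightarrow> 'a set \<Rightarrow> 'a set \<Rightarrow> bool" where
  "separated S T Z \<longleftrightarrow> (\<forall>u v. {u, v} \<in> E2 \<longrightarrow> u \<in> S \<longrightarrow> v \<notin> T) \<and>
     (\<forall>u v z. ({u, v}, z) \<in> E3 \<longrightarrow> u \<in> S \<longrightarrow> v \<in> T \<longrightarrow> z \<notin> T \<union> Z)"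

lemma separatedD2: "separated S T Z \<Longrightarrow> {u, v} \<in> E2 \<Longrightarrow> u \<in> S \<Longrightarrow> v \<notin> T"
  unfolding separated_def by blast

lemma separatedD3: "separated S T Z \<Longrightarrow> ({u, v}, z) \<in> E3 \<Longrightarrow> u \<in> S \<Longrightarrow> v \<in> T \<Longrightarrow> z \<notin> T \<union> Z"
  unfolding separated_def by blast

lemma separated_mono:
  "separated S T Z \<Longrightarrow> S' \<subseteq> S \<Longrightarrow> T' \<subseteq> T \<Longrightarrow> Z' \<subseteq> T \<union> Z \<Longrightarrow> separated S' T' Z'"
  unfolding separated_def by blast

(* S: retired vertices, xs: current path, T: unvisited vertices, Z: unused candidates for third
   vertices. Every vertex removed from T or Z is charged to a vertex of S or xs, at most twice each. *)
definition dfs_state :: "'a set \<Rightarrow> 'a set \<Rightarrow> 'a set \<Rightarrow> 'a list \<Rightarrow> 'a set \<Rightarrow> 'a set \<Rightarrow> bool" where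
  "dfs_state T0 Z0 S xs T Z \<longleftrightarrow>
     S \<union> set xs \<union> T \<subseteq> T0 \<and> S \<inter> set xs = {} \<and> S \<inter> T = {} \<and> set xs \<inter> T = {} \<and> Z \<subseteq> Z0 \<and>
     (\<exists>I w. path23_witnessed V E2 E3 xs I w \<and> w ` I \<inter> (T \<union> Z) = {}) \<and> length xs < n \<and>
     card (T0 \<union> Z0 - (T \<union> Z)) \<le> 2 * (card S + length xs) \<and> separated S T Z"

context
  fixes T0 Z0 :: "'a set"
  assumes T0: "T0 \<subseteq> V" and Z0: "Z0 \<subseteq> V" and disjoint: "T0 \<inter> Z0 = {}"
begin

lemma dfs_state_finite:
  assumes "dfs_state T0 Z0 S xs T Z"
  shows "finite S" "finite T"
proof -
  have "finite T0"
    using T0 finite_V by (rule finite_subset)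
  then show "finite S" "finite T"
    using assms by (auto simp: dfs_state_def intro: finite_subset[OF _ \<open>finite T0\<close>])
qed

lemma dfs_state_init: "dfs_state T0 Z0 {} [] T0 Z0"
proof -
  have "path23_witnessed V E2 E3 [] {} w" for w :: "nat \<Rightarrow> 'a"
    by (simp add: path23_witnessed_def)
  then have "0 < n"
    using no_path path23_iff_witnessed by fastforce
  then show ?thesis
    using \<open>path23_witnessed V E2 E3 [] {} undefined\<close>
    by (auto simp: dfs_state_def separated_def)
qed

lemma dfs_state_unvisited_nonempty:
  assumes "dfs_state T0 Z0 S [] T Z" "2 * card S < card T0"
  shows "T \<noteq> {}"
proof
  assume "T = {}"
  have "card T0 \<le> card (T0 \<union> Z0 - (T \<union> Z))"
    using assms(1) T0 Z0 disjoint finite_V \<open>T = {}\<close>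
    by (intro card_mono) (auto simp: dfs_state_def intro: finite_subset)
  also have "\<dots> \<le> 2 * card S"
    using assms(1) by (simp add: dfs_state_def)
  finally show False
    using assms(2) by linarith
qed

lemma dfs_state_push_2edge:
  assumes state: "dfs_state T0 Z0 S xs T Z" and y: "y \<in> T" and edge: "xs = [] \<or> {last xs, y} \<in> E2"
  shows "dfs_state T0 Z0 S (xs @ [y]) (T - {y}) Z"
proof -
  obtain I w where path: "path23_witnessed V E2 E3 xs I w" and wit: "w ` I \<inter> (T \<union> Z) = {}"
    using state by (auto simp: dfs_state_def)
  have "y \<in> V" "y \<notin> set xs"
    using state y T0 by (auto simp: dfs_state_def)
  then have path': "path23_witnessed V E2 E3 (xs @ [y]) I w"
    using path wit y edge by (intro path23_witnessed_snoc_2edge) auto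
  then have "length (xs @ [y]) < n"
    using state path23_witnessed_shorter by (force simp: dfs_state_def)
  moreover have "card (T0 \<union> Z0 - (T - {y} \<union> Z)) \<le> card (T0 \<union> Z0 - (T \<union> Z)) + card {y}"
    using T0 Z0 finite_V by (intro card_Diff_le_add_card) (auto intro: finite_subset)
  moreover have "separated S (T - {y}) Z"
    using state unfolding dfs_state_def by (auto elim: separated_mono)
  ultimately show ?thesis
    using state path' wit y unfolding dfs_state_def by auto
qed

lemma dfs_state_push_3edge:
  assumes state: "dfs_state T0 Z0 S xs T Z" and "xs \<noteq> []" and y: "y \<in> T" and z: "z \<in> T \<union> Z"
    and edge: "({last xs, y}, z) \<in> E3"
  shows "dfs_state T0 Z0 S (xs @ [y]) (T - {y, z}) (Z - {z})"
proof -
  obtain I w where path: "path23_witnessed V E2 E3 xs I w" and wit: "w ` I \<inter> (T \<union> Z) = {}"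
    using state by (auto simp: dfs_state_def)
  have "y \<in> V" "y \<notin> set xs" "z \<in> V" "z \<notin> set xs"
    using state y z T0 Z0 disjoint by (auto simp: dfs_state_def)
  then have path': "path23_witnessed V E2 E3 (xs @ [y]) (insert (length xs - 1) I) (w(length xs - 1 := z))"
    using path wit y z edge E3_witness_distinct \<open>xs \<noteq> []\<close> by (intro path23_witnessed_snoc_3edge) auto
  moreover have "w(length xs - 1 := z) ` insert (length xs - 1) I \<inter> (T - {y, z} \<union> (Z - {z})) = {}"
    using wit by auto
  ultimately have path_avoids:
    "\<exists>I w. path23_witnessed V E2 E3 (xs @ [y]) I w \<and> w ` I \<inter> (T - {y, z} \<union> (Z - {z})) = {}"
    by blast
  have "length (xs @ [y]) < n"
    using path' state path23_witnessed_shorter by (force simp: dfs_state_def)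
  have "card (T0 \<union> Z0 - (T - {y, z} \<union> (Z - {z}))) \<le> card (T0 \<union> Z0 - (T \<union> Z)) + card {y, z}"
    using T0 Z0 finite_V by (intro card_Diff_le_add_card) (auto intro: finite_subset)
  moreover have "card {y, z} \<le> 2"
    by (simp add: card_insert_if)
  ultimately have "card (T0 \<union> Z0 - (T - {y, z} \<union> (Z - {z}))) \<le> 2 * (card S + length (xs @ [y]))"
    using state by (simp add: dfs_state_def)
  moreover have "separated S (T - {y, z}) (Z - {z})"
    using state unfolding dfs_state_def by (auto elim: separated_mono)
  moreover have "S \<union> set (xs @ [y]) \<union> (T - {y, z}) \<subseteq> T0" "S \<inter> set (xs @ [y]) = {}"
    "S \<inter> (T - {y, z}) = {}" "set (xs @ [y]) \<inter> (T - {y, z}) = {}" "Z - {z} \<subseteq> Z0"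
    using state y by (auto simp: dfs_state_def)
  ultimately show ?thesis
    using path_avoids \<open>length (xs @ [y]) < n\<close> unfolding dfs_state_def by blast
qed

lemma dfs_state_pop:
  assumes state: "dfs_state T0 Z0 S xs T Z" and "xs \<noteq> []"
    and no_2edge: "\<forall>y\<in>T. {last xs, y} \<notin> E2"
    and no_3edge: "\<forall>y\<in>T. \<forall>z\<in>T \<union> Z. ({last xs, y}, z) \<notin> E3"
  shows "dfs_state T0 Z0 (insert (last xs) S) (butlast xs) T Z"
proof -
  obtain I w where path: "path23_witnessed V E2 E3 xs I w" and wit: "w ` I \<inter> (T \<union> Z) = {}"
    using state by (auto simp: dfs_state_def)
  have "last xs \<notin> set (butlast xs)"
    using path \<open>xs \<noteq> []\<close> unfolding path23_witnessed_def
    by (metis append_butlast_last_id distinct_append disjoint_iff list.set_intros(1))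
  moreover have "set (butlast xs) \<subseteq> set xs"
    by (auto simp: in_set_butlastD)
  moreover have "last xs \<in> set xs"
    using \<open>xs \<noteq> []\<close> by simp
  then have "last xs \<notin> T"
    using state by (auto simp: dfs_state_def)
  moreover have "last xs \<notin> S"
    using state \<open>last xs \<in> set xs\<close> by (auto simp: dfs_state_def)
  then have "card (insert (last xs) S) = Suc (card S)"
    using dfs_state_finite(1)[OF state] by simp
  moreover have "separated (insert (last xs) S) T Z"
    using state no_2edge no_3edge unfolding dfs_state_def separated_def by auto
  moreover have "w ` (I \<inter> {..<length xs - 2}) \<inter> (T \<union> Z) = {}"
    using wit by auto
  ultimately show ?thesis
    using state path23_witnessed_butlast[OF path] \<open>xs \<noteq> []\<close>
    unfolding dfs_state_def by auto
qed

lemma dfs_step: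
  assumes state: "dfs_state T0 Z0 S xs T Z" and "card S < s" and "2 * s \<le> card T0"
  shows "\<exists>S' xs' T' Z'. dfs_state T0 Z0 S' xs' T' Z' \<and> card S' \<le> s \<and>
           (s - card S') + 2 * card T' + length xs' < (s - card S) + 2 * card T + length xs"
proof -
  have progress: "\<exists>S' xs' T' Z'. dfs_state T0 Z0 S' xs' T' Z' \<and> card S' \<le> s \<and>
           (s - card S') + 2 * card T' + length xs' < (s - card S) + 2 * card T + length xs"
    if "dfs_state T0 Z0 S' xs' T' Z'" "card S' \<le> s"
      "(s - card S') + 2 * card T' + length xs' < (s - card S) + 2 * card T + length xs"
    for S' xs' T' Z'
    using that by blast
  note finite = dfs_state_finite[OF state]
  have "T \<noteq> {}" if "xs = []"
    using dfs_state_unvisited_nonempty state that assms(2,3) by simp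
  then consider (push2) y where "y \<in> T" "xs = [] \<or> {last xs, y} \<in> E2"
    | (push3) y z where "xs \<noteq> []" "y \<in> T" "z \<in> T \<union> Z" "({last xs, y}, z) \<in> E3"
    | (pop) "xs \<noteq> []" "\<forall>y\<in>T. {last xs, y} \<notin> E2" "\<forall>y\<in>T. \<forall>z\<in>T \<union> Z. ({last xs, y}, z) \<notin> E3"
    by blast
  then show ?thesis
  proof cases
    case (push2 y)
    with finite(2) have "0 < card T"
      by (auto simp: card_gt_0_iff)
    then show ?thesis
      using push2 \<open>card S < s\<close> finite(2) by (intro progress[OF dfs_state_push_2edge[OF state push2]]) auto
  next
    case (push3 y z)
    have "card (T - {y, z}) < card T"
      using push3 finite(2) by (intro psubset_card_mono) auto
    then show ?thesis
      using \<open>card S < s\<close> by (intro progress[OF dfs_state_push_3edge[OF state push3]]) auto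
  next
    case pop
    have "last xs \<notin> S"
      using state \<open>xs \<noteq> []\<close> by (auto simp: dfs_state_def)
    then show ?thesis
      using \<open>xs \<noteq> []\<close> \<open>card S < s\<close> finite(1) by (intro progress[OF dfs_state_pop[OF state pop]]) auto
  qed
qed

lemma dfs_terminates:
  assumes "dfs_state T0 Z0 S xs T Z" "card S \<le> s" "2 * s \<le> card T0"
  shows "\<exists>S T Z. S \<subseteq> T0 \<and> T \<subseteq> T0 \<and> S \<inter> T = {} \<and> Z \<subseteq> Z0 \<and> card S = s \<and>
           card (T0 \<union> Z0 - (T \<union> Z)) \<le> 2 * s + 2 * n \<and> separated S T Z"
  using assms(1,2)
proof (induction "(s - card S) + 2 * card T + length xs" arbitrary: S xs T Z rule: less_induct)
  case less
  show ?case
  proof (cases "card S = s")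
    case True
    with less.prems(1) have "S \<subseteq> T0" "T \<subseteq> T0" "S \<inter> T = {}" "Z \<subseteq> Z0" "separated S T Z"
      "card (T0 \<union> Z0 - (T \<union> Z)) \<le> 2 * s + 2 * n"
      by (auto simp: dfs_state_def)
    with True show ?thesis
      by blast
  next
    case False
    with less.prems have "card S < s"
      by simp
    then obtain S' xs' T' Z' where next_state: "dfs_state T0 Z0 S' xs' T' Z'" "card S' \<le> s"
      and decrease: "(s - card S') + 2 * card T' + length xs' < (s - card S) + 2 * card T + length xs"
      using dfs_step[OF less.prems(1) _ assms(3)] by blast
    show ?thesis
      by (rule less.hyps[OF decrease next_state])
  qed
qed

lemma exists_separated_subset:
  assumes "2 * s \<le> card T0"
  shows "\<exists>S T Z. S \<subseteq> T0 \<and> T \<subseteq> T0 \<and> S \<inter> T = {} \<and> Z \<subseteq> Z0 \<and> card S = s \<and>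
           card (T0 \<union> Z0 - (T \<union> Z)) \<le> 2 * s + 2 * n \<and> separated S T Z"
  using dfs_terminates[OF dfs_state_init _ assms] by simp

end

fun separated_parts :: "'a set list \<Rightarrow> 'a set \<Rightarrow> bool" where
  "separated_parts [] Z \<longleftrightarrow> True"
| "separated_parts (A # As) Z \<longleftrightarrow> separated A (\<Union>(set As)) Z \<and> separated_parts As (Z \<union> A)"

lemma separated_parts_antimono: "separated_parts As Z \<Longrightarrow> Z' \<subseteq> Z \<Longrightarrow> separated_parts As Z'"
proof (induction As arbitrary: Z Z')
  case (Cons A As)
  have "separated A (\<Union>(set As)) Z"
    using Cons.prems(1) by simp
  then have "separated A (\<Union>(set As)) Z'"
    by (rule separated_mono) (use Cons.prems(2) in auto)
  moreover have "separated_parts As (Z \<union> A)"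
    using Cons.prems(1) by simp
  then have "separated_parts As (Z' \<union> A)"
    by (rule Cons.IH) (use Cons.prems(2) in auto)
  ultimately show ?case
    by simp
qed simp

lemma separated_parts_Cons:
  assumes "separated S T Z1" "\<Union>(set As) \<subseteq> T" "separated_parts As Z2"
  shows "separated_parts ((S \<inter> Z2) # As) (Z1 \<inter> Z2)"
proof -
  have "separated (S \<inter> Z2) (\<Union>(set As)) (Z1 \<inter> Z2)"
    using assms(1) by (rule separated_mono) (use assms(2) in auto)
  moreover have "separated_parts As (Z1 \<inter> Z2 \<union> S \<inter> Z2)"
    using assms(3) by (rule separated_parts_antimono) auto
  ultimately show ?thesis
    by simp
qed

lemma separated_parts_nth:
  assumes "separated_parts As Z" "i < l" "l < length As"
  shows "separated (As ! i) (As ! l) (Z \<union> (\<Union>q\<in>{..<length As} - {i}. As ! q))"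
  using assms
proof (induction As arbitrary: Z i l)
  case (Cons A As)
  obtain l' where l: "l = Suc l'" "l' < length As"
    using Cons.prems(2,3) by (cases l) auto
  show ?case
  proof (cases i)
    case 0
    have "separated A (\<Union>(set As)) Z"
      using Cons.prems(1) by simp
    then show ?thesis
      unfolding 0 l
    proof (rule separated_mono)
      show "Z \<union> (\<Union>q\<in>{..<length (A # As)} - {0}. (A # As) ! q) \<subseteq> \<Union>(set As) \<union> Z"
        by (simp only: length_Cons UN_nth_Cons_0) auto
    qed (use nth_mem[OF l(2)] in auto)
  next
    case (Suc i')
    have "separated (As ! i') (As ! l') (Z \<union> A \<union> (\<Union>q\<in>{..<length As} - {i'}. As ! q))"
      by (rule Cons.IH) (use Cons.prems Suc l in simp_all)
    then show ?thesis
      unfolding Suc l by (simp only: length_Cons nth_Cons_Suc UN_nth_Cons_Suc Un_assoc)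
  qed
qed simp

lemma separated_parts_E2_nth_eq:
  assumes "separated_parts As Z" "{u, v} \<in> E2" "u \<in> As ! i" "v \<in> As ! l" "i < length As" "l < length As"
  shows "i = l"
proof (rule ccontr)
  assume "i \<noteq> l"
  then consider "i < l" | "l < i"
    by linarith
  then show False
  proof cases
    case 1
    show False
      using separatedD2[OF separated_parts_nth[OF assms(1) 1 assms(6)] assms(2,3)] assms(4) by blast
  next
    case 2
    have "{v, u} \<in> E2"
      using assms(2) by (simp add: insert_commute)
    then show False
      using separatedD2[OF separated_parts_nth[OF assms(1) 2 assms(5)] _ assms(4)] assms(3) by blast
  qed
qed

lemma separated_parts_E3_nth_min:
  assumes "separated_parts As Z" "({u, v}, w) \<in> E3" "u \<in> As ! i" "v \<in> As ! l" "w \<in> As ! q"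
    and "i \<noteq> l" "i < length As" "l < length As" "q < length As"
  shows "q = min i l"
proof (rule ccontr)
  assume q: "q \<noteq> min i l"
  consider "i < l" | "l < i"
    using assms(6) by linarith
  then show False
  proof cases
    case 1
    then have "w \<in> Z \<union> (\<Union>p\<in>{..<length As} - {i}. As ! p)"
      using q assms(5,9) by auto
    then show False
      using separatedD3[OF separated_parts_nth[OF assms(1) 1 assms(8)] assms(2-4)] by blast
  next
    case 2
    then have "w \<in> Z \<union> (\<Union>p\<in>{..<length As} - {l}. As ! p)"
      using q assms(5,9) by auto
    moreover have "({v, u}, w) \<in> E3"
      using assms(2) by (simp add: insert_commute)
    ultimately show False
      using separatedD3[OF separated_parts_nth[OF assms(1) 2 assms(7)] _ assms(4,3)] by blast
  qed
qed

lemma separated_parts_not_transversal2: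
  assumes "separated_parts As Z" "{u, v} \<in> E2"
  shows "\<not> transversal2 (length As) (\<lambda>i. As ! (i - 1)) u v"
proof
  assume "transversal2 (length As) (\<lambda>i. As ! (i - 1)) u v"
  then obtain i j where ij: "i \<in> {1..length As}" "j \<in> {1..length As}" "i \<noteq> j"
    and uv: "u \<in> As ! (i - 1)" "v \<in> As ! (j - 1)"
    unfolding transversal2_def by blast
  have "i - 1 < length As" "j - 1 < length As"
    using ij by auto
  then have "i - 1 = j - 1"
    by (rule separated_parts_E2_nth_eq[OF assms uv])
  then show False
    using ij by auto
qed

lemma separated_parts_not_transversal3:
  assumes "separated_parts As Z" "({u, v}, w) \<in> E3"
  shows "\<not> transversal3 (length As) (\<lambda>i. As ! (i - 1)) u v w"
proof
  assume "transversal3 (length As) (\<lambda>i. As ! (i - 1)) u v w"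
  then obtain i j l where ijl: "i \<in> {1..length As}" "j \<in> {1..length As}" "l \<in> {1..length As}"
    "i \<noteq> j" "i \<noteq> l" "j \<noteq> l" and uvw: "u \<in> As ! (i - 1)" "v \<in> As ! (j - 1)" "w \<in> As ! (l - 1)"
    unfolding transversal3_def by blast
  have "i - 1 \<noteq> j - 1" "i - 1 < length As" "j - 1 < length As" "l - 1 < length As"
    using ijl by auto
  then have "l - 1 = min (i - 1) (j - 1)"
    by (rule separated_parts_E3_nth_min[OF assms uvw])
  then show False
    using ijl by (auto simp: min_def split: if_splits)
qed

lemma separated_parts_E3_last_part:
  assumes "separated_parts As Z" "({u, v}, w) \<in> E3" "i \<in> {1..<length As}"
    and "u \<in> As ! (i - 1)" "v \<in> As ! (length As - 1)"
  shows "w \<notin> As ! (length As - 1)"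
proof
  assume "w \<in> As ! (length As - 1)"
  moreover have "i - 1 \<noteq> length As - 1" "i - 1 < length As" "length As - 1 < length As"
    using assms(3) by auto
  ultimately have "length As - 1 = min (i - 1) (length As - 1)"
    using separated_parts_E3_nth_min[OF assms(1,2,4,5)] by blast
  then show False
    using assms(3) by auto
qed

(* The size 2a - m of S lets m vertices of S survive the at most 2a - 2m third vertices that the
   recursion into T may take out of the reservoir. *)
lemma split_off_separated_subset:
  assumes "U \<subseteq> V" "Z \<subseteq> V" "U \<inter> Z = {}" "n \<le> m" "m \<le> a" "a \<le> b" "5 * b \<le> card U"
  shows "\<exists>S T Z1. S \<subseteq> U \<and> T \<subseteq> U \<and> S \<inter> T = {} \<and> Z1 \<subseteq> Z \<and> card S + m = 2 * a \<and>
           b \<le> card T \<and> card (Z - Z1) \<le> 4 * a \<and> separated S T Z1"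
proof -
  define s where "s = 2 * a - m"
  have "s + m = 2 * a"
    unfolding s_def using assms(5) by simp
  then have "2 * s \<le> card U"
    using assms(6,7) by linarith
  obtain S T Z1 where ST: "S \<subseteq> U" "T \<subseteq> U" "S \<inter> T = {}" "Z1 \<subseteq> Z" "card S = s"
    and lost: "card (U \<union> Z - (T \<union> Z1)) \<le> 2 * s + 2 * n" and "separated S T Z1"
    using exists_separated_subset[OF assms(1-3) \<open>2 * s \<le> card U\<close>] by blast
  have "card (U \<union> Z - (T \<union> Z1)) \<le> 4 * a"
    using lost \<open>s + m = 2 * a\<close> assms(4) by linarith
  moreover have "finite (U \<union> Z)"
    using assms(1,2) finite_V by (simp add: finite_subset)
  moreover have "U - T \<subseteq> U \<union> Z - (T \<union> Z1)" "Z - Z1 \<subseteq> U \<union> Z - (T \<union> Z1)"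
    using assms(3) ST(2,4) by auto
  ultimately have "card (U - T) \<le> 4 * a" "card (Z - Z1) \<le> 4 * a"
    by (meson card_mono finite_Diff le_trans)+
  moreover have "card U = card T + card (U - T)"
    using card_Int_Diff[of U T] \<open>finite (U \<union> Z)\<close> ST(2) by (simp add: Int_absorb1)
  ultimately have "b \<le> card T"
    using assms(6,7) by linarith
  then show ?thesis
    using ST \<open>s + m = 2 * a\<close> \<open>card (Z - Z1) \<le> 4 * a\<close> \<open>separated S T Z1\<close> by blast
qed

lemma card_new_part_bounds:
  assumes "finite Z" "finite (Z1 \<union> S)" "card S + m = 2 * a" "card (Z - Z1) \<le> 4 * a"
    and "card (Z1 \<union> S - Z2) + 2 * m \<le> 2 * a"
  shows "m \<le> card (S \<inter> Z2)" "card (Z - Z1 \<inter> Z2) + 2 * m \<le> 6 * a"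
proof -
  have "card (S - Z2) \<le> card (Z1 \<union> S - Z2)"
    using assms(2) by (intro card_mono) auto
  moreover have "card S = card (S \<inter> Z2) + card (S - Z2)"
    using assms(2) by (intro card_Int_Diff) simp
  ultimately show "m \<le> card (S \<inter> Z2)"
    using assms(3,5) by linarith
  have "card (Z - Z1 \<inter> Z2) \<le> card ((Z - Z1) \<union> (Z1 \<union> S - Z2))"
    using assms(1,2) by (intro card_mono) auto
  also have "\<dots> \<le> card (Z - Z1) + card (Z1 \<union> S - Z2)"
    by (rule card_Un_le)
  finally show "card (Z - Z1 \<inter> Z2) + 2 * m \<le> 6 * a"
    using assms(4,5) by linarith
qed

lemma exists_separated_parts:
  assumes "n \<le> m" "U \<subseteq> V" "Z \<subseteq> V" "U \<inter> Z = {}" "5 ^ j * m \<le> card U"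
  shows "\<exists>As Z'. length As = Suc j \<and> (\<forall>A\<in>set As. A \<subseteq> U \<and> m \<le> card A) \<and> sorted_wrt disjnt As \<and>
           Z' \<subseteq> Z \<and> card (Z - Z') + 2 * m \<le> 2 * 3 ^ j * m \<and> separated_parts As Z'"
  using assms(2-)
proof (induction j arbitrary: U Z)
  case 0
  then show ?case
    by (intro exI[of _ "[U]"] exI[of _ Z]) (simp add: separated_def)
next
  case (Suc j)
  define a where "a = 3 ^ j * m"
  have a: "m \<le> a" "a \<le> 5 ^ j * m"
    unfolding a_def by (simp_all add: power_mono)
  have U: "5 * (5 ^ j * m) \<le> card U"
    using Suc.prems(4) by simp
  obtain S T Z1 where ST: "S \<subseteq> U" "T \<subseteq> U" "S \<inter> T = {}" "Z1 \<subseteq> Z" "card S + m = 2 * a"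
    and T: "5 ^ j * m \<le> card T" and Z1: "card (Z - Z1) \<le> 4 * a" and "separated S T Z1"
    using split_off_separated_subset[OF Suc.prems(1-3) assms(1) a U] by blast
  have TZ: "T \<subseteq> V" "Z1 \<union> S \<subseteq> V" "T \<inter> (Z1 \<union> S) = {}"
    using ST Suc.prems(1-3) by auto
  obtain As Z2 where As: "length As = Suc j" "\<forall>A\<in>set As. A \<subseteq> T \<and> m \<le> card A" "sorted_wrt disjnt As"
    and Z2: "Z2 \<subseteq> Z1 \<union> S" "card (Z1 \<union> S - Z2) + 2 * m \<le> 2 * 3 ^ j * m" and "separated_parts As Z2"
    using Suc.IH[OF TZ T] by blast
  have "finite Z" "finite (Z1 \<union> S)"
    using Suc.prems(2) TZ(2) finite_V by (auto intro: finite_subset)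
  then have "m \<le> card (S \<inter> Z2)" "card (Z - Z1 \<inter> Z2) + 2 * m \<le> 2 * 3 ^ Suc j * m"
    using card_new_part_bounds[OF _ _ ST(5) Z1] Z2(2) unfolding a_def by (simp_all add: mult.assoc)
  moreover have "separated_parts (S \<inter> Z2 # As) (Z1 \<inter> Z2)"
    using \<open>separated S T Z1\<close> _ \<open>separated_parts As Z2\<close> by (rule separated_parts_Cons) (use As(2) in auto)
  moreover have "sorted_wrt disjnt (S \<inter> Z2 # As)"
    using As(2,3) ST(3) by (auto simp: disjnt_def)
  ultimately show ?case
    using As(1,2) ST(1,2,4)
    by (intro exI[of _ "S \<inter> Z2 # As"] exI[of _ "Z1 \<inter> Z2"]) auto
qed

end

theorem lemma3p2:
  fixes V :: "'a set" and E2 :: "'a set set" and E3 :: "('a set \<times> 'a) set"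
    and k c n :: nat
  assumes "k > 0" "c > 0" "n > 0"
    and "finite V" and "graph23 V E2 E3"
    and "card V \<ge> 5 ^ (k - 1) * c * n"
    and "\<not> (\<exists>xs. length xs = n \<and> path23 V E2 E3 xs)"
  shows "\<exists>Vs :: nat \<Rightarrow> 'a set.
           (\<forall>i\<in>{1..k}. Vs i \<subseteq> V \<and> card (Vs i) \<ge> c * n) \<and>
           (\<forall>i\<in>{1..k}. \<forall>j\<in>{1..k}. i \<noteq> j \<longrightarrow> Vs i \<inter> Vs j = {}) \<and>
           (\<forall>u v. {u, v} \<in> E2 \<longrightarrow> \<not> transversal2 k Vs u v) \<and>
           (\<forall>u v w. ({u, v}, w) \<in> E3 \<longrightarrow> \<not> transversal3 k Vs u v w) \<and>
           (\<forall>u v w. ({u, v}, w) \<in> E3 \<longrightarrow>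
              \<not> ((\<exists>i\<in>{1..<k}. u \<in> Vs i) \<and> v \<in> Vs k \<and> w \<in> Vs k))"
proof -
  interpret path_free_graph23 V E2 E3 n
    using assms(4,5,7) by unfold_locales auto
  obtain As Z where As: "length As = k" "\<forall>A\<in>set As. A \<subseteq> V \<and> c * n \<le> card A" "sorted_wrt disjnt As"
    and sep: "separated_parts As Z"
    using exists_separated_parts[of "c * n" V "{}" "k - 1"] assms(1,2,6) by (auto simp: mult.assoc)
  have index: "i - 1 < length As" if "i \<in> {1..k}" for i
    using that As(1) by auto
  have sizes: "\<forall>i\<in>{1..k}. As ! (i - 1) \<subseteq> V \<and> c * n \<le> card (As ! (i - 1))"
    using As(2) index nth_mem by blast
  have disjoint: "\<forall>i\<in>{1..k}. \<forall>j\<in>{1..k}. i \<noteq> j \<longrightarrow> As ! (i - 1) \<inter> As ! (j - 1) = {}"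
  proof (intro ballI impI)
    fix i j assume ij: "i \<in> {1..k}" "j \<in> {1..k}" "i \<noteq> j"
    then have "i - 1 \<noteq> j - 1"
      by auto
    then show "As ! (i - 1) \<inter> As ! (j - 1) = {}"
      by (rule sorted_wrt_disjnt_nth[OF As(3) index[OF ij(1)] index[OF ij(2)]])
  qed
  show ?thesis
    using sizes disjoint separated_parts_not_transversal2[OF sep] separated_parts_not_transversal3[OF sep]
      separated_parts_E3_last_part[OF sep]
    unfolding As(1) by (intro exI[of _ "\<lambda>i. As ! (i - 1)"]) blast
qed

end
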